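(* Suppose there is $K>0$ such that $\|\nabla_{(\theta,x)}\ell(\theta,x)-\nabla_{(\theta,x)}\ell(\theta',x')\|\le K\|(\theta,x)-(\theta',x')\|$ for all $(\theta,x),(\theta',x')\in\mathbb{R}^{d_\theta}\times\mathbb{R}^{d_x}$. Fix $\eta_\theta,\gamma_\theta,\eta_x,\gamma_x>0$ and define $b:\mathbb{R}^{2d_x}\times\mathbb{R}^{2d_\theta}\times\mathcal{P}(\mathbb{R}^{2d_x})\to\mathbb{R}^{2d_\theta+2d_x}$ by $$b((x,u),(\theta,m),q)=\begin{pmatrix}\eta_\theta m\\-\gamma_\theta\eta_\theta m-\nabla_\theta\mathcal{F}(\theta,q)\\\eta_xu\\-\gamma_x\eta_xu+\nabla_x\ell(\theta,x)\end{pmatrix}.$$ Then there is a constant $K_b>0$ such that $$\|b(\Upsilon,\vartheta,q)-b(\Upsilon',\vartheta',q')\|\le K_b\big(\|\Upsilon-\Upsilon'\|+\|\vartheta-\vartheta'\|+\mathsf{W}_1(q,q')\big)$$ for all $\Upsilon,\Upsilon'\in\mathbb{R}^{2d_x}$, $\vartheta,\vartheta'\in\mathbb{R}^{2d_\theta}$ and $q,q'\in\mathcal{P}(\mathbb{R}^{2d_x})$.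
   Context: $\ell(\theta,x)=\log p_\theta(y,x)$ for a latent variable model with fixed data $y$. $\mathcal{P}(\mathbb{R}^{2d_x})$: probability measures on $\mathbb{R}^{d_x}\times\mathbb{R}^{d_x}$ with Lebesgue density and finite second moment; $\mathsf{W}_1$ is the Wasserstein-1 distance. $\nabla_\theta\mathcal{F}(\theta,q):=-\int\nabla_\theta\ell(\theta,x)\,q(\mathrm{d}x,\mathrm{d}u)$. Points are written $\Upsilon=(x,u)$ and $\vartheta=(\theta,m)$. *)

theory Defs
  imports "HOL-Probability.Probability"
begin

definition Pspace :: "'a::euclidean_space measure set" where
  "Pspace = {q. prob_space q
              \<and> (\<exists>f. f \<in> borel_measurable lborel \<and> q = density lborel f)
              \<and> (\<integral>\<^sup>+ z. ennreal ((norm z)\<^sup>2) \<partial>q) < \<infinity>}"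

definition couplings :: "'a::euclidean_space measure \<Rightarrow> 'a measure \<Rightarrow> ('a \<times> 'a) measure set" where
  "couplings \<mu> \<nu> = {\<pi>. prob_space \<pi> \<and> sets \<pi> = sets (borel \<Otimes>\<^sub>M borel)
                        \<and> distr \<pi> borel fst = \<mu> \<and> distr \<pi> borel snd = \<nu>}"

definition W1 :: "'a::euclidean_space measure \<Rightarrow> 'a measure \<Rightarrow> ennreal" where
  "W1 \<mu> \<nu> = (INF \<pi>\<in>couplings \<mu> \<nu>. \<integral>\<^sup>+ p. ennreal (dist (fst p) (snd p)) \<partial>\<pi>)"

text \<open>The drift b. G is the full gradient of l (pairs (theta, x)); fst (G (theta,x)) is
  grad_theta l and snd (G (theta,x)) is grad_x l.  grad_theta F(theta,q) = - int grad_theta l(theta,x) q(dx,du).\<close>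
definition drift ::
  "real \<Rightarrow> real \<Rightarrow> real \<Rightarrow> real \<Rightarrow> ('a::euclidean_space \<times> 'b::euclidean_space \<Rightarrow> 'a \<times> 'b)
   \<Rightarrow> 'b \<times> 'b \<Rightarrow> 'a \<times> 'a \<Rightarrow> ('b \<times> 'b) measure \<Rightarrow> ('a \<times> 'a) \<times> ('b \<times> 'b)" where
  "drift \<eta>\<theta> \<gamma>\<theta> \<eta>x \<gamma>x G \<Upsilon> \<omega> q =
     (let x = fst \<Upsilon>; u = snd \<Upsilon>; \<theta> = fst \<omega>; m = snd \<omega>;
          gradF = - (\<integral> z. fst (G (\<theta>, fst z)) \<partial>q)
      in ((\<eta>\<theta> *\<^sub>R m, - (\<gamma>\<theta> * \<eta>\<theta>) *\<^sub>R m - gradF),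
          (\<eta>x *\<^sub>R u, - (\<gamma>x * \<eta>x) *\<^sub>R u + snd (G (\<theta>, x)))))"

end

theory Submission
  imports Defs
begin

text \<open>
  Freezing the measure, the drift is Lipschitz in the state: its linear part trivially, the
  term \<open>\<nabla>\<^sub>x\<ell>\<close> because \<open>\<nabla>\<ell>\<close> is \<open>K\<close>-Lipschitz, and the mean-field term because
  averaging a \<open>K\<close>-Lipschitz integrand over a probability measure keeps the constant \<open>K\<close>.
  Freezing the state, the drift only changes through \<open>\<integral>\<nabla>\<^sub>\<theta>\<ell>(\<theta>, x) q(dx, du)\<close>, an integral of a
  \<open>K\<close>-Lipschitz function of \<open>(x, u)\<close>; integrating its increment against any coupling of \<open>q\<close>
  and \<open>q'\<close> bounds the change by \<open>K \<cdot> W\<^sub>1(q, q')\<close> (the easy half of Kantorovich--Rubinstein).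
  Finite second moments make all these integrals finite.
\<close>

lemma integrable_lipschitz_if_finite_second_moment:
  fixes f :: "'a::euclidean_space \<Rightarrow> 'b::euclidean_space"
  assumes M: "prob_space M" and sets_M: "sets M = sets borel"
    and moment: "(\<integral>\<^sup>+ z. ennreal ((norm z)\<^sup>2) \<partial>M) < \<infinity>"
    and lip: "L-lipschitz_on UNIV f"
  shows "integrable M f"
proof -
  have borel_M: "borel_measurable M = borel_measurable borel"
    by (rule measurable_cong_sets[OF sets_M refl])
  have f_meas: "f \<in> borel_measurable M"
    unfolding borel_M by (rule borel_measurable_continuous_onI[OF lipschitz_on_continuous_on[OF lip]])
  have "integrable M (\<lambda>z. (norm z)\<^sup>2)"
    using moment by (intro integrableI_bounded) (simp_all add: borel_M)
  then have bound_int: "integrable M (\<lambda>z. (norm (f 0) + L) + L * (norm z)\<^sup>2)"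
    using prob_space.finite_measure[OF M]
    by (intro Bochner_Integration.integrable_add integrable_mult_right)
      (simp_all add: finite_measure.integrable_const)
  have "norm (f z) \<le> norm ((norm (f 0) + L) + L * (norm z)\<^sup>2)" for z
  proof -
    have "norm (f z) \<le> norm (f 0) + L * norm z"
      using lipschitz_on_normD[OF lip, of z 0] norm_triangle_sub[of "f z" "f 0"] by simp
    also have "\<dots> \<le> norm (f 0) + L * (1 + (norm z)\<^sup>2)"
    proof -
      have "2 * norm z \<le> (norm z)\<^sup>2 + 1"
        using zero_le_power2[of "norm z - 1"] by (simp add: power2_diff)
      then have "norm z \<le> 1 + (norm z)\<^sup>2"
        using norm_ge_zero[of z] by linarith
      then show ?thesis using lipschitz_on_nonneg[OF lip] by (simp add: mult_left_mono)
    qed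
    finally show ?thesis using lipschitz_on_nonneg[OF lip] by (simp add: algebra_simps)
  qed
  then show ?thesis
    by (intro Bochner_Integration.integrable_bound[OF bound_int f_meas] AE_I2)
qed

lemma integrable_lipschitz_if_Pspace:
  fixes f :: "'a::euclidean_space \<Rightarrow> 'b::euclidean_space"
  assumes "q \<in> Pspace" and "L-lipschitz_on UNIV f"
  shows "integrable q f"
  using assms by (intro integrable_lipschitz_if_finite_second_moment) (auto simp: Pspace_def)

lemma (in prob_space) norm_integral_diff_le:
  fixes f g :: "'a \<Rightarrow> 'b::{banach, second_countable_topology}"
  assumes f: "integrable M f" and g: "integrable M g"
    and bound: "\<And>x. x \<in> space M \<Longrightarrow> norm (f x - g x) \<le> c"
  shows "norm (integral\<^sup>L M f - integral\<^sup>L M g) \<le> c"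
proof -
  have "norm (integral\<^sup>L M f - integral\<^sup>L M g) = norm (\<integral>x. f x - g x \<partial>M)"
    using f g by simp
  also have "\<dots> \<le> (\<integral>x. norm (f x - g x) \<partial>M)"
    by (rule integral_norm_bound)
  also have "\<dots> \<le> c"
    using f g bound by (intro integral_le_const) auto
  finally show ?thesis .
qed

lemma lipschitz_integral_diff_le_coupling:
  fixes f :: "'a::euclidean_space \<Rightarrow> 'b::euclidean_space"
  assumes lip: "L-lipschitz_on UNIV f"
    and f_\<mu>: "integrable \<mu> f" and f_\<nu>: "integrable \<nu> f"
    and \<pi>: "\<pi> \<in> couplings \<mu> \<nu>"
  shows "ennreal (norm (integral\<^sup>L \<mu> f - integral\<^sup>L \<nu> f))
           \<le> ennreal L * (\<integral>\<^sup>+ p. ennreal (dist (fst p) (snd p)) \<partial>\<pi>)"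
proof -
  from \<pi> have sets_\<pi>: "sets \<pi> = sets (borel \<Otimes>\<^sub>M borel)"
    and \<mu>: "\<mu> = distr \<pi> borel fst" and \<nu>: "\<nu> = distr \<pi> borel snd"
    unfolding couplings_def by auto
  note measurable_\<pi> = measurable_cong_sets[OF sets_\<pi> refl]
  have [measurable]: "fst \<in> measurable \<pi> borel" "snd \<in> measurable \<pi> borel"
    by (simp_all add: measurable_\<pi>)
  have [measurable]: "f \<in> borel_measurable borel"
    by (rule borel_measurable_continuous_onI[OF lipschitz_on_continuous_on[OF lip]])
  have f_fst: "integrable \<pi> (\<lambda>p. f (fst p))" and f_snd: "integrable \<pi> (\<lambda>p. f (snd p))"
    using f_\<mu> f_\<nu> by (simp_all add: \<mu> \<nu> integrable_distr_eq)
  have "ennreal (norm (integral\<^sup>L \<mu> f - integral\<^sup>L \<nu> f)) = ennreal (norm (\<integral>p. f (fst p) - f (snd p) \<partial>\<pi>))"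
    using f_fst f_snd by (simp add: \<mu> \<nu> integral_distr)
  also have "\<dots> \<le> (\<integral>\<^sup>+ p. norm (f (fst p) - f (snd p)) \<partial>\<pi>)"
    using f_fst f_snd by (intro integral_norm_bound_ennreal) auto
  also have "\<dots> \<le> (\<integral>\<^sup>+ p. ennreal L * ennreal (dist (fst p) (snd p)) \<partial>\<pi>)"
    using lipschitz_onD[OF lip] lipschitz_on_nonneg[OF lip]
    by (intro nn_integral_mono) (simp add: dist_norm ennreal_mult'[symmetric])
  also have "\<dots> = ennreal L * (\<integral>\<^sup>+ p. ennreal (dist (fst p) (snd p)) \<partial>\<pi>)"
    by (rule nn_integral_cmult) (simp add: measurable_\<pi>)
  finally show ?thesis .
qed

lemma lipschitz_integral_diff_le_W1:
  fixes f :: "'a::euclidean_space \<Rightarrow> 'b::euclidean_space"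
  assumes lip: "L-lipschitz_on UNIV f" and L: "L > 0"
    and f_\<mu>: "integrable \<mu> f" and f_\<nu>: "integrable \<nu> f"
  shows "ennreal (norm (integral\<^sup>L \<mu> f - integral\<^sup>L \<nu> f)) \<le> ennreal L * W1 \<mu> \<nu>"
proof -
  define d where "d = norm (integral\<^sup>L \<mu> f - integral\<^sup>L \<nu> f) / L"
  have norm_eq: "ennreal (norm (integral\<^sup>L \<mu> f - integral\<^sup>L \<nu> f)) = ennreal L * ennreal d"
    using L by (simp add: d_def ennreal_mult'[symmetric])
  have "ennreal d \<le> W1 \<mu> \<nu>"
    unfolding W1_def
  proof (rule INF_greatest)
    fix \<pi> assume "\<pi> \<in> couplings \<mu> \<nu>"
    from lipschitz_integral_diff_le_coupling[OF lip f_\<mu> f_\<nu> this] L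
    show "ennreal d \<le> (\<integral>\<^sup>+ p. ennreal (dist (fst p) (snd p)) \<partial>\<pi>)"
      by (simp add: norm_eq ennreal_mult_le_mult_iff)
  qed
  then show ?thesis
    by (simp add: norm_eq mult_left_mono)
qed

text \<open>\<open>expected_grad_theta G \<theta> q\<close> is \<open>-\<nabla>\<^sub>\<theta>\<F>(\<theta>, q)\<close>.\<close>

definition expected_grad_theta ::
  "('a::euclidean_space \<times> 'b \<Rightarrow> 'a \<times> 'b) \<Rightarrow> 'a \<Rightarrow> ('b \<times> 'b) measure \<Rightarrow> 'a"
  where "expected_grad_theta G \<theta> q = (\<integral>z. fst (G (\<theta>, fst z)) \<partial>q)"

lemma drift_Pair:
  "drift \<eta>\<theta> \<gamma>\<theta> \<eta>x \<gamma>x G (x, u) (\<theta>, m) q =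
     ((\<eta>\<theta> *\<^sub>R m, - (\<gamma>\<theta> * \<eta>\<theta>) *\<^sub>R m + expected_grad_theta G \<theta> q),
      (\<eta>x *\<^sub>R u, - (\<gamma>x * \<eta>x) *\<^sub>R u + snd (G (\<theta>, x))))"
  by (simp add: drift_def expected_grad_theta_def)

lemma norm_drift_diff_measure:
  "norm (drift \<eta>\<theta> \<gamma>\<theta> \<eta>x \<gamma>x G \<Upsilon> \<omega> q - drift \<eta>\<theta> \<gamma>\<theta> \<eta>x \<gamma>x G \<Upsilon> \<omega> q')
     = norm (expected_grad_theta G (fst \<omega>) q - expected_grad_theta G (fst \<omega>) q')"
  by (cases \<Upsilon>, cases \<omega>) (simp add: drift_Pair)

lemma lipschitz_on_normD_Pair:
  assumes "K-lipschitz_on UNIV G"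
  shows "norm (G (a, b) - G (a', b')) \<le> K * (norm (a - a') + norm (b - b'))"
proof -
  have "norm (G (a, b) - G (a', b')) \<le> K * norm (a - a', b - b')"
    using lipschitz_on_normD[OF assms UNIV_I UNIV_I, of "(a, b)" "(a', b')"] by simp
  also have "\<dots> \<le> K * (norm (a - a') + norm (b - b'))"
    using lipschitz_on_nonneg[OF assms] norm_Pair_le by (rule mult_left_mono[rotated])
  finally show ?thesis .
qed

lemma lipschitz_on_fst_section:
  fixes G :: "'a::metric_space \<times> 'b::metric_space \<Rightarrow> 'c::metric_space \<times> 'd::metric_space"
  assumes "K-lipschitz_on UNIV G"
  shows "K-lipschitz_on UNIV (\<lambda>z. fst (G (\<theta>, fst z)))"
proof (rule lipschitz_onI)
  fix z z' :: "'b \<times> 'e::metric_space"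
  have "dist (fst (G (\<theta>, fst z))) (fst (G (\<theta>, fst z'))) \<le> dist (G (\<theta>, fst z)) (G (\<theta>, fst z'))"
    by (rule dist_fst_le)
  also have "\<dots> \<le> K * dist (fst z) (fst z')"
    using lipschitz_onD[OF assms UNIV_I UNIV_I, of "(\<theta>, fst z)" "(\<theta>, fst z')"] by (simp add: dist_Pair_Pair)
  also have "\<dots> \<le> K * dist z z'"
    using lipschitz_on_nonneg[OF assms] dist_fst_le by (rule mult_left_mono[rotated])
  finally show "dist (fst (G (\<theta>, fst z))) (fst (G (\<theta>, fst z'))) \<le> K * dist z z'" .
qed (rule lipschitz_on_nonneg[OF assms])

lemma norm_expected_grad_theta_diff_le:
  fixes G :: "'a::euclidean_space \<times> 'b::euclidean_space \<Rightarrow> 'a \<times> 'b"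
  assumes lip: "K-lipschitz_on UNIV G" and q: "prob_space q"
    and int: "\<And>\<theta>. integrable q (\<lambda>z. fst (G (\<theta>, fst z)))"
  shows "norm (expected_grad_theta G \<theta> q - expected_grad_theta G \<theta>' q) \<le> K * norm (\<theta> - \<theta>')"
  unfolding expected_grad_theta_def
proof (rule prob_space.norm_integral_diff_le[OF q int int])
  fix z :: "'b \<times> 'b"
  have "norm (fst (G (\<theta>, fst z)) - fst (G (\<theta>', fst z))) \<le> norm (G (\<theta>, fst z) - G (\<theta>', fst z))"
    by (metis fst_diff norm_fst_le prod.collapse)
  also have "\<dots> \<le> K * norm (\<theta> - \<theta>')"
    using lipschitz_on_normD_Pair[OF lip] by (metis add.right_neutral diff_self norm_zero)
  finally show "norm (fst (G (\<theta>, fst z)) - fst (G (\<theta>', fst z))) \<le> K * norm (\<theta> - \<theta>')" .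
qed

lemma norm_damped_diff_le:
  fixes v v' w w' :: "'a::real_normed_vector"
  assumes "0 \<le> c"
  shows "norm ((- c *\<^sub>R v + w) - (- c *\<^sub>R v' + w')) \<le> c * norm (v - v') + norm (w - w')"
proof -
  have eq: "(- c *\<^sub>R v + w) - (- c *\<^sub>R v' + w') = (w - w') - c *\<^sub>R (v - v')"
    by (simp add: algebra_simps)
  show ?thesis
    unfolding eq using norm_triangle_ineq4[of "w - w'" "c *\<^sub>R (v - v')"] assms
    by (simp add: add.commute)
qed

lemma norm_drift_diff_state_le:
  fixes G :: "'a::euclidean_space \<times> 'b::euclidean_space \<Rightarrow> 'a \<times> 'b"
  assumes lip: "K-lipschitz_on UNIV G" and q: "prob_space q"
    and int: "\<And>\<theta>. integrable q (\<lambda>z. fst (G (\<theta>, fst z)))"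
    and nonneg: "0 \<le> \<eta>\<theta>" "0 \<le> \<gamma>\<theta>" "0 \<le> \<eta>x" "0 \<le> \<gamma>x"
  shows "norm (drift \<eta>\<theta> \<gamma>\<theta> \<eta>x \<gamma>x G \<Upsilon> \<omega> q - drift \<eta>\<theta> \<gamma>\<theta> \<eta>x \<gamma>x G \<Upsilon>' \<omega>' q)
           \<le> (\<eta>\<theta> + \<gamma>\<theta> * \<eta>\<theta> + \<eta>x + \<gamma>x * \<eta>x + 2 * K) * (norm (\<Upsilon> - \<Upsilon>') + norm (\<omega> - \<omega>'))"
proof -
  obtain x u x' u' \<theta> m \<theta>' m' where
    pairs: "\<Upsilon> = (x, u)" "\<Upsilon>' = (x', u')" "\<omega> = (\<theta>, m)" "\<omega>' = (\<theta>', m')"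
    by (metis prod.collapse)
  define dU dW where "dU = norm (\<Upsilon> - \<Upsilon>')" and "dW = norm (\<omega> - \<omega>')"
  have dU: "norm (x - x') \<le> dU" "norm (u - u') \<le> dU"
    using norm_fst_le norm_snd_le by (simp_all add: dU_def pairs)
  have dW: "norm (\<theta> - \<theta>') \<le> dW" "norm (m - m') \<le> dW"
    using norm_fst_le norm_snd_le by (simp_all add: dW_def pairs)
  have K: "0 \<le> K"
    using lip by (rule lipschitz_on_nonneg)
  have grad_\<theta>: "norm (expected_grad_theta G \<theta> q - expected_grad_theta G \<theta>' q) \<le> K * dW"
    using norm_expected_grad_theta_diff_le[OF lip q int, of \<theta> \<theta>'] dW(1) K
    by (meson mult_left_mono order_trans)
  have grad_x: "norm (snd (G (\<theta>, x)) - snd (G (\<theta>', x'))) \<le> K * (dW + dU)"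
  proof -
    have "norm (snd (G (\<theta>, x)) - snd (G (\<theta>', x'))) \<le> norm (G (\<theta>, x) - G (\<theta>', x'))"
      by (metis snd_diff norm_snd_le prod.collapse)
    also have "\<dots> \<le> K * (norm (\<theta> - \<theta>') + norm (x - x'))"
      using lip by (rule lipschitz_on_normD_Pair)
    also have "\<dots> \<le> K * (dW + dU)"
      using dU dW K by (intro mult_left_mono add_mono)
    finally show ?thesis .
  qed
  have "norm (drift \<eta>\<theta> \<gamma>\<theta> \<eta>x \<gamma>x G \<Upsilon> \<omega> q - drift \<eta>\<theta> \<gamma>\<theta> \<eta>x \<gamma>x G \<Upsilon>' \<omega>' q)
      \<le> \<eta>\<theta> * norm (m - m') + (\<gamma>\<theta> * \<eta>\<theta> * norm (m - m') + norm (expected_grad_theta G \<theta> q - expected_grad_theta G \<theta>' q))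
        + (\<eta>x * norm (u - u') + (\<gamma>x * \<eta>x * norm (u - u') + norm (snd (G (\<theta>, x)) - snd (G (\<theta>', x')))))"
    unfolding pairs drift_Pair diff_Pair scaleR_diff_right[symmetric]
    using nonneg
    by (intro order_trans[OF norm_Pair_le] add_mono order_trans[OF norm_Pair_le] norm_damped_diff_le) simp_all
  also have "\<dots> \<le> \<eta>\<theta> * dW + (\<gamma>\<theta> * \<eta>\<theta> * dW + K * dW) + (\<eta>x * dU + (\<gamma>x * \<eta>x * dU + K * (dW + dU)))"
    using dU dW grad_\<theta> grad_x nonneg by (intro add_mono mult_left_mono) auto
  also have "\<dots> \<le> (\<eta>\<theta> + \<gamma>\<theta> * \<eta>\<theta> + \<eta>x + \<gamma>x * \<eta>x + 2 * K) * (dU + dW)"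
    using nonneg K by (simp add: algebra_simps dU_def dW_def)
  finally show ?thesis by (simp add: dU_def dW_def)
qed

lemma norm_drift_diff_le_W1:
  fixes G :: "'a::euclidean_space \<times> 'b::euclidean_space \<Rightarrow> 'a \<times> 'b"
  assumes lip: "K-lipschitz_on UNIV G" and K_pos: "K > 0"
    and nonneg: "0 \<le> \<eta>\<theta>" "0 \<le> \<gamma>\<theta>" "0 \<le> \<eta>x" "0 \<le> \<gamma>x"
    and q: "q \<in> Pspace" and q': "q' \<in> Pspace"
  shows "ennreal (norm (drift \<eta>\<theta> \<gamma>\<theta> \<eta>x \<gamma>x G \<Upsilon> \<omega> q - drift \<eta>\<theta> \<gamma>\<theta> \<eta>x \<gamma>x G \<Upsilon>' \<omega>' q'))
           \<le> ennreal (\<eta>\<theta> + \<gamma>\<theta> * \<eta>\<theta> + \<eta>x + \<gamma>x * \<eta>x + 2 * K)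
               * (ennreal (norm (\<Upsilon> - \<Upsilon>') + norm (\<omega> - \<omega>')) + W1 q q')"
    (is "ennreal (norm (?b \<Upsilon> \<omega> q - ?b \<Upsilon>' \<omega>' q')) \<le> ennreal ?Kb * (ennreal ?d + _)")
proof -
  have section_lip: "K-lipschitz_on UNIV (\<lambda>z::'b \<times> 'b. fst (G (\<theta>, fst z)))" for \<theta>
    using lip by (rule lipschitz_on_fst_section)
  have int: "integrable p (\<lambda>z. fst (G (\<theta>, fst z)))" if "p \<in> Pspace" for p :: "('b \<times> 'b) measure" and \<theta>
    using that section_lip[of \<theta>] by (rule integrable_lipschitz_if_Pspace)
  have state: "norm (?b \<Upsilon> \<omega> q - ?b \<Upsilon>' \<omega>' q) \<le> ?Kb * ?d"
    using lip int[OF q] q nonneg by (intro norm_drift_diff_state_le) (auto simp: Pspace_def)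
  have measure: "ennreal (norm (?b \<Upsilon>' \<omega>' q - ?b \<Upsilon>' \<omega>' q')) \<le> ennreal K * W1 q q'"
    unfolding norm_drift_diff_measure expected_grad_theta_def
    using section_lip K_pos int[OF q] int[OF q'] by (rule lipschitz_integral_diff_le_W1)
  have "ennreal (norm (?b \<Upsilon> \<omega> q - ?b \<Upsilon>' \<omega>' q'))
      \<le> ennreal (norm (?b \<Upsilon> \<omega> q - ?b \<Upsilon>' \<omega>' q)) + ennreal (norm (?b \<Upsilon>' \<omega>' q - ?b \<Upsilon>' \<omega>' q'))"
    using norm_diff_triangle_le[OF order_refl order_refl]
    by (simp add: ennreal_plus[symmetric] del: ennreal_plus)
  also have "\<dots> \<le> ennreal ?Kb * ennreal ?d + ennreal ?Kb * W1 q q'"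
  proof (rule add_mono)
    have "K \<le> ?Kb"
      using nonneg K_pos mult_nonneg_nonneg[of \<gamma>\<theta> \<eta>\<theta>] mult_nonneg_nonneg[of \<gamma>x \<eta>x] by linarith
    then show "ennreal (norm (?b \<Upsilon> \<omega> q - ?b \<Upsilon>' \<omega>' q)) \<le> ennreal ?Kb * ennreal ?d"
      using state K_pos by (simp add: ennreal_mult[symmetric] ennreal_leI del: ennreal_plus)
    from \<open>K \<le> ?Kb\<close> show "ennreal (norm (?b \<Upsilon>' \<omega>' q - ?b \<Upsilon>' \<omega>' q')) \<le> ennreal ?Kb * W1 q q'"
      using measure by (meson ennreal_leI mult_right_mono order_trans zero_le)
  qed
  finally show ?thesis
    by (simp add: distrib_left)
qed

theorem propositionG2:
  fixes ell :: "'a::euclidean_space \<times> 'b::euclidean_space \<Rightarrow> real"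
    and G :: "'a \<times> 'b \<Rightarrow> 'a \<times> 'b"
    and K \<eta>\<theta> \<gamma>\<theta> \<eta>x \<gamma>x :: real
  assumes grad: "\<And>z. (ell has_derivative (\<lambda>h. G z \<bullet> h)) (at z)"
    and K_pos: "K > 0"
    and Lip: "\<And>z z'. norm (G z - G z') \<le> K * norm (z - z')"
    and params: "\<eta>\<theta> > 0" "\<gamma>\<theta> > 0" "\<eta>x > 0" "\<gamma>x > 0"
  shows "\<exists>Kb > 0. \<forall>\<Upsilon> \<Upsilon>' \<omega> \<omega>' q q'. q \<in> Pspace \<longrightarrow> q' \<in> Pspace \<longrightarrow>
           ennreal (norm (drift \<eta>\<theta> \<gamma>\<theta> \<eta>x \<gamma>x G \<Upsilon> \<omega> q - drift \<eta>\<theta> \<gamma>\<theta> \<eta>x \<gamma>x G \<Upsilon>' \<omega>' q'))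
             \<le> ennreal Kb * (ennreal (norm (\<Upsilon> - \<Upsilon>') + norm (\<omega> - \<omega>')) + W1 q q')"
proof -
  have "K-lipschitz_on UNIV G"
    using Lip K_pos by (intro lipschitz_onI) (simp_all add: dist_norm)
  from norm_drift_diff_le_W1[OF this K_pos] params
  show ?thesis
    by (intro exI[of _ "\<eta>\<theta> + \<gamma>\<theta> * \<eta>\<theta> + \<eta>x + \<gamma>x * \<eta>x + 2 * K"]) (simp add: K_pos add_pos_pos)
qed

end
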